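(* Consider the following remote estimation problem. Let $a\in\mathbb{R}$ and $x(t+1)=ax(t)+w(t)$, $x(0)=x_0$, where $\{w(t)\}$ are i.i.d. with a symmetric unimodal density with finite second moment. A channel $c(t)\in\{0,1\}$ is a Markov chain with $\mathbb{P}(c(t+1)=1\mid c(t)=0)=p_{01}$, $\mathbb{P}(c(t+1)=1\mid c(t)=1)=p_{11}$, $p_{01},p_{11}\in(0,1)$. The sensor chooses $u(t)\in\{0,1\}$; the estimator receives $y(t)=x(t)$ if $u(t)=1$ and $c(t)=1$, and $y(t)=\Xi$ otherwise. The sensor learns $c(t)$ at time $t+1$ only if $u(t)=1$; $b(t)$ is its conditional probability that $c(t)=1$ (updated as $b(t+1)=p_{11}$ if $u(t)=1,c(t)=1$; $p_{01}$ if $u(t)=1,c(t)=0$; $p_{11}b(t)+p_{01}(1-b(t))$ if $u(t)=0$). Define $v(-1)=x_0$, $v(t)=av(t-1)$ if $y(t)=\Xi$ and $v(t)=y(t)$ otherwise, $e(t)=x(t)-av(t-1)$, $e^+(t)=x(t)-v(t)$. Fix $\lambda>0$, $\beta\in(0,1)$. Problem 1 (restricted form): scheduling strategies $u(t)=\tilde f_t(e(t),b(t),y(0),\dots,y(t-1))$ and estimation strategies $\hat x(t)=\tilde g_t(y(0),\dots,y(t))+v(t)$, with cost $\mathbb{E}\big[\sum_{t\ge0}\beta^t((x(t)-\hat x(t))^2+\lambda u(t))\big]$. Problem 2: a coordination strategy $\ell=(\ell_t)$ maps $y(0),\dots,y(t-1)$ to a prescription $\Gamma_t=\ell_t(y(0),\dots,y(t-1))$,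 a measurable map $\mathbb{R}\times[0,1]\to\{0,1\}$, and the sensor acts as $u(t)=\Gamma_t(e(t),b(t))$; the estimation strategy $\tilde g$ produces $\hat e(t)=\tilde g_t(y(0),\dots,y(t))$; the cost is $\mathbb{E}\big[\sum_{t\ge0}\beta^t((e^+(t)-\hat e(t))^2+\lambda u(t))\big]$. Then for any $(\tilde f,\tilde g)$ in Problem 1 there exists $(\ell,\tilde g)$ in Problem 2 achieving the same expected cost as $(\tilde f,\tilde g)$ in Problem 1; conversely, for any $(\ell,\tilde g)$ in Problem 2 there exists $(\tilde f,\tilde g)$ in Problem 1 achieving the same expected cost as $(\ell,\tilde g)$ in Problem 2.
   Context: All maps are measurable. $\Xi$ is a symbol meaning no packet received. *)

theory Defs
  imports "HOL-Probability.Probability"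
begin

text \<open>Observations: y(t) :: real option, where None encodes the symbol Xi
  (no packet received) and Some z encodes a received packet with value z.\<close>

definition Ymeas :: "real option measure" where
  "Ymeas = measure_of UNIV {A. Some -` A \<in> sets borel} (\<lambda>_. 0)"

text \<open>Transition probabilities of the Gilbert-Elliott channel
  (True = 1 = good, False = 0 = bad).\<close>

definition chtrans :: "real \<Rightarrow> real \<Rightarrow> bool \<Rightarrow> bool \<Rightarrow> real" where
  "chtrans p01 p11 cur nx = (let q = (if cur then p11 else p01) in if nx then q else 1 - q)"

fun xst :: "real \<Rightarrow> real \<Rightarrow> (nat \<Rightarrow> real) \<Rightarrow> nat \<Rightarrow> real" where
  "xst a x0 w 0 = x0"
| "xst a x0 w (Suc t) = a * xst a x0 w t + w t"

text \<open>A generic sensor policy pol t e b h gives u(t) from e(t), b(t) and the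
  observation history h = (y(0),...,y(t-1)) (as an extensional function on {..<t}).
  The closed loop state at time t is (v(t-1), b(t), history of y(0..t-1)).\<close>

type_synonym policy = "nat \<Rightarrow> real \<Rightarrow> real \<Rightarrow> (nat \<Rightarrow> real option) \<Rightarrow> bool"

fun loop :: "real \<Rightarrow> real \<Rightarrow> real \<Rightarrow> real \<Rightarrow> real \<Rightarrow> (nat \<Rightarrow> real) \<Rightarrow> (nat \<Rightarrow> bool)
    \<Rightarrow> policy \<Rightarrow> nat \<Rightarrow> real \<times> real \<times> (nat \<Rightarrow> real option)" where
  "loop a p01 p11 b0 x0 w c pol 0 = (x0, b0, (\<lambda>_. None))"
| "loop a p01 p11 b0 x0 w c pol (Suc t) =
    (let (vp, b, h) = loop a p01 p11 b0 x0 w c pol t;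
         x = xst a x0 w t;
         e = x - a * vp;
         u = pol t e b (restrict h {..<t});
         y = (if u \<and> c t then Some x else None);
         v = (case y of None \<Rightarrow> a * vp | Some z \<Rightarrow> z);
         b' = (if u then (if c t then p11 else p01) else p11 * b + p01 * (1 - b))
     in (v, b', h(t := y)))"

definition vprev where "vprev a p01 p11 b0 x0 w c pol t = fst (loop a p01 p11 b0 x0 w c pol t)"
definition bel where "bel a p01 p11 b0 x0 w c pol t = fst (snd (loop a p01 p11 b0 x0 w c pol t))"
definition hist where "hist a p01 p11 b0 x0 w c pol t = restrict (snd (snd (loop a p01 p11 b0 x0 w c pol t))) {..<t}"

definition err where "err a p01 p11 b0 x0 w c pol t = xst a x0 w t - a * vprev a p01 p11 b0 x0 w c pol t"
definition sch where "sch a p01 p11 b0 x0 w c pol t =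
   pol t (err a p01 p11 b0 x0 w c pol t) (bel a p01 p11 b0 x0 w c pol t) (hist a p01 p11 b0 x0 w c pol t)"
definition obs where "obs a p01 p11 b0 x0 w c pol t =
   (if sch a p01 p11 b0 x0 w c pol t \<and> c t then Some (xst a x0 w t) else None)"
definition vst where "vst a p01 p11 b0 x0 w c pol t =
   (case obs a p01 p11 b0 x0 w c pol t of None \<Rightarrow> a * vprev a p01 p11 b0 x0 w c pol t | Some z \<Rightarrow> z)"
definition errp where "errp a p01 p11 b0 x0 w c pol t = xst a x0 w t - vst a p01 p11 b0 x0 w c pol t"
definition histc where "histc a p01 p11 b0 x0 w c pol t = restrict (hist a p01 p11 b0 x0 w c pol (Suc t)) {..t}"

definition sched_strategy :: "policy \<Rightarrow> bool" where
  "sched_strategy f = (\<forall>t. (\<lambda>(z, h). f t (fst z) (snd z) h)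
      \<in> (borel :: (real \<times> real) measure) \<Otimes>\<^sub>M PiM {..<t} (\<lambda>_. Ymeas) \<rightarrow>\<^sub>M count_space UNIV)"

definition est_strategy :: "(nat \<Rightarrow> (nat \<Rightarrow> real option) \<Rightarrow> real) \<Rightarrow> bool" where
  "est_strategy g = (\<forall>t. g t \<in> PiM {..t} (\<lambda>_. Ymeas) \<rightarrow>\<^sub>M borel)"

text \<open>Coordination strategy: l t h is the prescription Gamma_t : R x [0,1] -> {0,1}
  (represented on R x R); measurability is required jointly in (history, argument).\<close>

definition coord_strategy :: "(nat \<Rightarrow> (nat \<Rightarrow> real option) \<Rightarrow> real \<times> real \<Rightarrow> bool) \<Rightarrow> bool" where
  "coord_strategy l = (\<forall>t. (\<lambda>(h, z). l t h z)
      \<in> PiM {..<t} (\<lambda>_. Ymeas) \<Otimes>\<^sub>M (borel :: (real \<times> real) measure) \<rightarrow>\<^sub>M count_space UNIV)"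

definition coord_policy :: "(nat \<Rightarrow> (nat \<Rightarrow> real option) \<Rightarrow> real \<times> real \<Rightarrow> bool) \<Rightarrow> policy" where
  "coord_policy l = (\<lambda>t e b h. l t h (e, b))"

definition cost1 where
  "cost1 M a p01 p11 b0 x0 w c lam \<beta> f g =
    (\<integral>\<^sup>+ \<omega>. (\<Sum>t. ennreal (\<beta> ^ t *
        ((xst a x0 (\<lambda>s. w s \<omega>) t
          - (g t (histc a p01 p11 b0 x0 (\<lambda>s. w s \<omega>) (\<lambda>s. c s \<omega>) f t)
             + vst a p01 p11 b0 x0 (\<lambda>s. w s \<omega>) (\<lambda>s. c s \<omega>) f t))\<^sup>2
         + lam * of_bool (sch a p01 p11 b0 x0 (\<lambda>s. w s \<omega>) (\<lambda>s. c s \<omega>) f t)))) \<partial>M)"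

definition cost2 where
  "cost2 M a p01 p11 b0 x0 w c lam \<beta> l g =
    (let pol = coord_policy l in
    (\<integral>\<^sup>+ \<omega>. (\<Sum>t. ennreal (\<beta> ^ t *
        ((errp a p01 p11 b0 x0 (\<lambda>s. w s \<omega>) (\<lambda>s. c s \<omega>) pol t
          - g t (histc a p01 p11 b0 x0 (\<lambda>s. w s \<omega>) (\<lambda>s. c s \<omega>) pol t))\<^sup>2
         + lam * of_bool (sch a p01 p11 b0 x0 (\<lambda>s. w s \<omega>) (\<lambda>s. c s \<omega>) pol t)))) \<partial>M))"

end

theory Submission
  imports Defs
begin

text \<open>A scheduling strategy and a coordination strategy are the same map, curried differently:
  the prescription is \<open>\<Gamma>\<^sub>t = f\<^sub>t(-, -, y(0), ..., y(t-1))\<close>. Under this correspondence the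
  closed loops coincide, and since \<open>e\<^sup>+(t) - g\<^sub>t = x(t) - (g\<^sub>t + v(t))\<close>, so do the costs.\<close>

lemma sched_strategy_coord_policy_iff: "sched_strategy (coord_policy l) \<longleftrightarrow> coord_strategy l"
proof -
  have "(\<lambda>(z, h). l t h (fst z, snd z))
          \<in> (borel :: (real \<times> real) measure) \<Otimes>\<^sub>M PiM {..<t} (\<lambda>_. Ymeas) \<rightarrow>\<^sub>M count_space UNIV
    \<longleftrightarrow> (\<lambda>(h, z). l t h z)
          \<in> PiM {..<t} (\<lambda>_. Ymeas) \<Otimes>\<^sub>M (borel :: (real \<times> real) measure) \<rightarrow>\<^sub>M count_space UNIV"
    for t
    by (subst measurable_pair_swap_iff) simp
  then show ?thesis
    unfolding sched_strategy_def coord_strategy_def coord_policy_def by simp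
qed

lemma cost2_eq_cost1_coord_policy:
  "cost2 M a p01 p11 b0 x0 w c lam \<beta> l g = cost1 M a p01 p11 b0 x0 w c lam \<beta> (coord_policy l) g"
proof -
  have "(x - v - e)\<^sup>2 = (x - (e + v))\<^sup>2" for x v e :: real
    by (simp add: algebra_simps)
  then show ?thesis
    unfolding cost1_def cost2_def Let_def errp_def by (simp only:)
qed

theorem lemma3:
  fixes M :: "'s measure"
    and w :: "nat \<Rightarrow> 's \<Rightarrow> real" and c :: "nat \<Rightarrow> 's \<Rightarrow> bool"
    and \<phi> :: "real \<Rightarrow> real"
    and a x0 p01 p11 b0 lam \<beta> :: real
  assumes "prob_space M"
    and w_meas: "\<And>t. w t \<in> borel_measurable M"
    and c_meas: "\<And>t. c t \<in> M \<rightarrow>\<^sub>M count_space UNIV"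
    and w_iid: "prob_space.indep_vars M (\<lambda>_. borel) w UNIV"
    and w_dens: "\<And>t. distributed M lborel (w t) (\<lambda>z. ennreal (\<phi> z))"
    and \<phi>_nonneg: "\<And>z. 0 \<le> \<phi> z"
    and \<phi>_symm: "\<And>z. \<phi> (- z) = \<phi> z"
    and \<phi>_unimodal: "\<And>z z'. 0 \<le> z \<Longrightarrow> z \<le> z' \<Longrightarrow> \<phi> z' \<le> \<phi> z"
    and \<phi>_2nd: "integrable lborel (\<lambda>z. z\<^sup>2 * \<phi> z)"
    and c_init: "measure M {\<omega> \<in> space M. c 0 \<omega>} = b0"
    and c_markov: "\<And>t (s :: nat \<Rightarrow> bool).
        measure M {\<omega> \<in> space M. \<forall>i\<le>Suc t. c i \<omega> = s i}
        = measure M {\<omega> \<in> space M. \<forall>i\<le>t. c i \<omega> = s i} * chtrans p01 p11 (s t) (s (Suc t))"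
    and c_w_indep: "prob_space.indep_var M
        (PiM UNIV (\<lambda>_. borel)) (\<lambda>\<omega> t. if c t \<omega> then 1 else (0::real))
        (PiM UNIV (\<lambda>_. borel)) (\<lambda>\<omega> t. w t \<omega>)"
    and "0 < p01" "p01 < 1" "0 < p11" "p11 < 1"
    and "0 \<le> b0" "b0 \<le> 1"
    and "0 < lam" and "0 < \<beta>" "\<beta> < 1"
  shows "(\<forall>f g. sched_strategy f \<and> est_strategy g \<longrightarrow>
            (\<exists>l. coord_strategy l \<and>
               cost2 M a p01 p11 b0 x0 w c lam \<beta> l g = cost1 M a p01 p11 b0 x0 w c lam \<beta> f g))
       \<and> (\<forall>l g. coord_strategy l \<and> est_strategy g \<longrightarrow>
            (\<exists>f. sched_strategy f \<and>
               cost1 M a p01 p11 b0 x0 w c lam \<beta> f g = cost2 M a p01 p11 b0 x0 w c lam \<beta> l g))"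
proof (intro conjI allI impI)
  fix f g assume "sched_strategy f \<and> est_strategy g"
  moreover have f_eq: "coord_policy (\<lambda>t h z. f t (fst z) (snd z) h) = f"
    by (simp add: coord_policy_def)
  ultimately have "coord_strategy (\<lambda>t h z. f t (fst z) (snd z) h)"
    by (simp flip: sched_strategy_coord_policy_iff)
  with f_eq show "\<exists>l. coord_strategy l \<and>
      cost2 M a p01 p11 b0 x0 w c lam \<beta> l g = cost1 M a p01 p11 b0 x0 w c lam \<beta> f g"
    by (intro exI[of _ "\<lambda>t h z. f t (fst z) (snd z) h"]) (simp add: cost2_eq_cost1_coord_policy)
next
  fix l g assume "coord_strategy l \<and> est_strategy g"
  then show "\<exists>f. sched_strategy f \<and>
      cost1 M a p01 p11 b0 x0 w c lam \<beta> f g = cost2 M a p01 p11 b0 x0 w c lam \<beta> l g"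
    by (intro exI[of _ "coord_policy l"]) (simp add: sched_strategy_coord_policy_iff cost2_eq_cost1_coord_policy)
qed

end
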